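(* Let the functions satisfy the $M=2$ system and the boundary conditions (B) (see context). Then for all $s>0$, $$e_3-sx_1y_2+2\eta_2+\xi_0-\eta_1+\eta_1\xi_2=0,\qquad e_2-2e_3-sx_0y_1-\eta_2-2\xi_0-\xi_1+\eta_0\xi_1=0 .$$
   Context: Fix complex parameters $\nu_0,\nu_1,\nu_2$ with $\nu_2-\nu_1\notin\mathbb Z$, and let $e_1=\nu_0+\nu_1+\nu_2$, $e_2=\nu_0\nu_1+\nu_0\nu_2+\nu_1\nu_2$, $e_3=\nu_0\nu_1\nu_2$. The $M=2$ system is the following system for smooth complex-valued functions $x_0,x_1,x_2,y_0,y_1,y_2,\xi_0,\xi_1,\xi_2,\eta_0,\eta_1,\eta_2$ of $s\in(0,\infty)$, with $'=d/ds$: $sx_0'=-\eta_0x_0-x_1$, $sx_1'=-\eta_1x_0-x_2$, $sx_2'=-\eta_2x_0-sx_0+\xi_0x_0+\xi_1x_1+\xi_2x_2$, $sy_2'=-\xi_2y_2+y_1$, $sy_1'=-\xi_1y_2+y_0$, $sy_0'=-\xi_0y_2+sy_2+\eta_0y_0+\eta_1y_1+\eta_2y_2$, $\xi_0'=-x_0y_0$, $\xi_1'=-x_0y_1$, $\xi_2'=-x_0y_2$, $\eta_0'=-x_0y_2$, $\eta_1'=-x_1y_2$, $\eta_2'=-x_2y_2$. Boundary conditions (B): as $s\to0^+$, $\eta_0,\eta_1,\eta_2\to0$, $\xi_0\to-e_3$, $\xi_1\to e_2$, $\xi_2\to-e_1$, and $x_j(s)y_k(s)\to0$, $s\,x_j(s)y_k(s)\to0$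 for all $j,k\in\{0,1,2\}$. *)

theory Defs
  imports "HOL-Analysis.Analysis"
begin

abbreviation D :: "(real \<Rightarrow> complex) \<Rightarrow> real \<Rightarrow> complex" where
  "D f s \<equiv> vector_derivative f (at s)"

definition M2_system ::
  "(nat \<Rightarrow> real \<Rightarrow> complex) \<Rightarrow> (nat \<Rightarrow> real \<Rightarrow> complex) \<Rightarrow>
   (nat \<Rightarrow> real \<Rightarrow> complex) \<Rightarrow> (nat \<Rightarrow> real \<Rightarrow> complex) \<Rightarrow> bool" where
  "M2_system x y xi eta \<longleftrightarrow>
    (\<forall>s>0. (\<forall>j\<le>2. x j differentiable (at s) \<and> y j differentiable (at s) \<and>
                   xi j differentiable (at s) \<and> eta j differentiable (at s)) \<and>
      of_real s * D (x 0) s = - eta 0 s * x 0 s - x 1 s \<and>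
      of_real s * D (x 1) s = - eta 1 s * x 0 s - x 2 s \<and>
      of_real s * D (x 2) s = - eta 2 s * x 0 s - of_real s * x 0 s
                               + xi 0 s * x 0 s + xi 1 s * x 1 s + xi 2 s * x 2 s \<and>
      of_real s * D (y 2) s = - xi 2 s * y 2 s + y 1 s \<and>
      of_real s * D (y 1) s = - xi 1 s * y 2 s + y 0 s \<and>
      of_real s * D (y 0) s = - xi 0 s * y 2 s + of_real s * y 2 s
                               + eta 0 s * y 0 s + eta 1 s * y 1 s + eta 2 s * y 2 s \<and>
      D (xi 0) s = - x 0 s * y 0 s \<and>
      D (xi 1) s = - x 0 s * y 1 s \<and>
      D (xi 2) s = - x 0 s * y 2 s \<and>
      D (eta 0) s = - x 0 s * y 2 s \<and>
      D (eta 1) s = - x 1 s * y 2 s \<and>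
      D (eta 2) s = - x 2 s * y 2 s)"

definition M2_boundary ::
  "complex \<Rightarrow> complex \<Rightarrow> complex \<Rightarrow>
   (nat \<Rightarrow> real \<Rightarrow> complex) \<Rightarrow> (nat \<Rightarrow> real \<Rightarrow> complex) \<Rightarrow>
   (nat \<Rightarrow> real \<Rightarrow> complex) \<Rightarrow> (nat \<Rightarrow> real \<Rightarrow> complex) \<Rightarrow> bool" where
  "M2_boundary e1 e2 e3 x y xi eta \<longleftrightarrow>
    (\<forall>j\<le>2. (eta j \<longlongrightarrow> 0) (at_right 0)) \<and>
    (xi 0 \<longlongrightarrow> - e3) (at_right 0) \<and>
    (xi 1 \<longlongrightarrow> e2) (at_right 0) \<and>
    (xi 2 \<longlongrightarrow> - e1) (at_right 0) \<and>
    (\<forall>j\<le>2. \<forall>k\<le>2. ((\<lambda>s. x j s * y k s) \<longlongrightarrow> 0) (at_right 0) \<and>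
                    ((\<lambda>s. of_real s * x j s * y k s) \<longlongrightarrow> 0) (at_right 0))"

end

theory Submission
  imports Defs
begin

text \<open>The pairing \<open>x\<^sub>0y\<^sub>0 + x\<^sub>1y\<^sub>1 + x\<^sub>2y\<^sub>2\<close> is a first integral of the system, and it vanishes
  at \<open>s = 0\<close> by (B), hence identically. Each of the two claimed expressions is a function whose
  \<open>s\<close>-derivative is plus or minus this pairing, so it is constant on \<open>(0,\<infinity>)\<close>; by (B) the constant
  is \<open>0\<close>.\<close>

lemma eq_limit_at_right_if_vector_derivative_zero:
  fixes g :: "real \<Rightarrow> 'a::real_normed_vector"
  assumes deriv: "\<And>s. s > 0 \<Longrightarrow> (g has_vector_derivative 0) (at s)"
    and lim: "(g \<longlongrightarrow> c) (at_right 0)"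
    and "s > 0"
  shows "g s = c"
proof -
  obtain c' where c': "\<And>t. t \<in> {0<..} \<Longrightarrow> g t = c'"
    using has_vector_derivative_zero_constant[of "{0<..}" g] deriv
    by (auto intro: has_vector_derivative_at_within)
  have "\<forall>\<^sub>F t in at_right 0. g t = c'"
    using c' by (auto simp: eventually_at_right_field intro: exI[of _ 1])
  with lim have "((\<lambda>_. c') \<longlongrightarrow> c) (at_right (0::real))"
    by (simp add: tendsto_cong)
  then have "c' = c" by (simp add: tendsto_const_iff)
  with c' \<open>s > 0\<close> show ?thesis by auto
qed

lemma M2_system_has_vector_derivative:
  assumes "M2_system x y xi eta" "s > 0" "j \<le> 2"
  shows "(x j has_vector_derivative D (x j) s) (at s)"
    and "(y j has_vector_derivative D (y j) s) (at s)"
    and "(xi j has_vector_derivative D (xi j) s) (at s)"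
    and "(eta j has_vector_derivative D (eta j) s) (at s)"
  using assms by (auto simp: M2_system_def vector_derivative_works)

lemma M2_systemD:
  assumes "M2_system x y xi eta" "s > 0"
  shows "of_real s * D (x 0) s = - eta 0 s * x 0 s - x 1 s"
    and "of_real s * D (x 1) s = - eta 1 s * x 0 s - x 2 s"
    and "of_real s * D (x 2) s = - eta 2 s * x 0 s - of_real s * x 0 s
                                 + xi 0 s * x 0 s + xi 1 s * x 1 s + xi 2 s * x 2 s"
    and "of_real s * D (y 2) s = - xi 2 s * y 2 s + y 1 s"
    and "of_real s * D (y 1) s = - xi 1 s * y 2 s + y 0 s"
    and "of_real s * D (y 0) s = - xi 0 s * y 2 s + of_real s * y 2 s
                                 + eta 0 s * y 0 s + eta 1 s * y 1 s + eta 2 s * y 2 s"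
    and "D (xi 0) s = - x 0 s * y 0 s"
    and "D (xi 1) s = - x 0 s * y 1 s"
    and "D (xi 2) s = - x 0 s * y 2 s"
    and "D (eta 0) s = - x 0 s * y 2 s"
    and "D (eta 1) s = - x 1 s * y 2 s"
    and "D (eta 2) s = - x 2 s * y 2 s"
  using assms unfolding M2_system_def by auto

definition M2_pairing :: "(nat \<Rightarrow> real \<Rightarrow> complex) \<Rightarrow> (nat \<Rightarrow> real \<Rightarrow> complex) \<Rightarrow> real \<Rightarrow> complex"
  where "M2_pairing x y s = x 0 s * y 0 s + x 1 s * y 1 s + x 2 s * y 2 s"

lemma M2_pairing_has_vector_derivative_zero:
  assumes sys: "M2_system x y xi eta" and "s > 0"
  shows "(M2_pairing x y has_vector_derivative 0) (at s)"
proof (rule has_vector_derivative_eq_rhs)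
  note d = M2_system_has_vector_derivative[OF sys \<open>s > 0\<close>]
  let ?E = "(x 0 s * D (y 0) s + D (x 0) s * y 0 s) + (x 1 s * D (y 1) s + D (x 1) s * y 1 s)
    + (x 2 s * D (y 2) s + D (x 2) s * y 2 s)"
  show "(M2_pairing x y has_vector_derivative ?E) (at s)"
    unfolding M2_pairing_def by (intro derivative_intros d) auto
  have "of_real s * ?E
    = x 0 s * (of_real s * D (y 0) s) + (of_real s * D (x 0) s) * y 0 s
      + x 1 s * (of_real s * D (y 1) s) + (of_real s * D (x 1) s) * y 1 s
      + x 2 s * (of_real s * D (y 2) s) + (of_real s * D (x 2) s) * y 2 s"
    by algebra
  also have "\<dots> = 0"
    unfolding M2_systemD[OF sys \<open>s > 0\<close>] by algebra
  finally show "?E = 0"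
    using \<open>s > 0\<close> by simp
qed

definition M2_first_integral_1 ::
  "complex \<Rightarrow> (nat \<Rightarrow> real \<Rightarrow> complex) \<Rightarrow> (nat \<Rightarrow> real \<Rightarrow> complex) \<Rightarrow>
   (nat \<Rightarrow> real \<Rightarrow> complex) \<Rightarrow> (nat \<Rightarrow> real \<Rightarrow> complex) \<Rightarrow> real \<Rightarrow> complex"
  where "M2_first_integral_1 e3 x y xi eta s =
    e3 - of_real s * x 1 s * y 2 s + 2 * eta 2 s + xi 0 s - eta 1 s + eta 1 s * xi 2 s"

definition M2_first_integral_2 ::
  "complex \<Rightarrow> complex \<Rightarrow> (nat \<Rightarrow> real \<Rightarrow> complex) \<Rightarrow> (nat \<Rightarrow> real \<Rightarrow> complex) \<Rightarrow>
   (nat \<Rightarrow> real \<Rightarrow> complex) \<Rightarrow> (nat \<Rightarrow> real \<Rightarrow> complex) \<Rightarrow> real \<Rightarrow> complex"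
  where "M2_first_integral_2 e2 e3 x y xi eta s =
    e2 - 2 * e3 - of_real s * x 0 s * y 1 s - eta 2 s - 2 * xi 0 s - xi 1 s + eta 0 s * xi 1 s"

lemma M2_first_integral_1_has_vector_derivative:
  assumes sys: "M2_system x y xi eta" and "s > 0"
  shows "(M2_first_integral_1 e3 x y xi eta has_vector_derivative - M2_pairing x y s) (at s)"
proof (rule has_vector_derivative_eq_rhs)
  note d = M2_system_has_vector_derivative[OF sys \<open>s > 0\<close>]
  let ?E = "0 - (of_real s * x 1 s * D (y 2) s + (of_real s * D (x 1) s + of_real 1 * x 1 s) * y 2 s)
        + 2 * D (eta 2) s + D (xi 0) s - D (eta 1) s + (eta 1 s * D (xi 2) s + D (eta 1) s * xi 2 s)"
  show "(M2_first_integral_1 e3 x y xi eta has_vector_derivative ?E) (at s)"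
    unfolding M2_first_integral_1_def by (intro derivative_intros d) auto
  have "of_real s * ?E = of_real s * (- (x 1 s * (of_real s * D (y 2) s) + (of_real s * D (x 1) s) * y 2 s
      + x 1 s * y 2 s) + 2 * D (eta 2) s + D (xi 0) s - D (eta 1) s + eta 1 s * D (xi 2) s
      + D (eta 1) s * xi 2 s)"
    unfolding of_real_1 by algebra
  also have "\<dots> = of_real s * (- M2_pairing x y s)"
    unfolding M2_systemD[OF sys \<open>s > 0\<close>] M2_pairing_def by algebra
  finally have "of_real s * ?E = of_real s * (- M2_pairing x y s)" .
  then show "?E = - M2_pairing x y s"
    using \<open>s > 0\<close> by (metis mult_left_cancel of_real_eq_0_iff less_irrefl)
qed

lemma M2_first_integral_2_has_vector_derivative:
  assumes sys: "M2_system x y xi eta" and "s > 0"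
  shows "(M2_first_integral_2 e2 e3 x y xi eta has_vector_derivative M2_pairing x y s) (at s)"
proof (rule has_vector_derivative_eq_rhs)
  note d = M2_system_has_vector_derivative[OF sys \<open>s > 0\<close>]
  let ?E = "0 - (of_real s * x 0 s * D (y 1) s + (of_real s * D (x 0) s + of_real 1 * x 0 s) * y 1 s)
        - D (eta 2) s - 2 * D (xi 0) s - D (xi 1) s + (eta 0 s * D (xi 1) s + D (eta 0) s * xi 1 s)"
  show "(M2_first_integral_2 e2 e3 x y xi eta has_vector_derivative ?E) (at s)"
    unfolding M2_first_integral_2_def by (intro derivative_intros d) auto
  have "of_real s * ?E = of_real s * (- (x 0 s * (of_real s * D (y 1) s) + (of_real s * D (x 0) s) * y 1 s
      + x 0 s * y 1 s) - D (eta 2) s - 2 * D (xi 0) s - D (xi 1) s + eta 0 s * D (xi 1) s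
      + D (eta 0) s * xi 1 s)"
    unfolding of_real_1 by algebra
  also have "\<dots> = of_real s * M2_pairing x y s"
    unfolding M2_systemD[OF sys \<open>s > 0\<close>] M2_pairing_def by algebra
  finally have "of_real s * ?E = of_real s * M2_pairing x y s" .
  then show "?E = M2_pairing x y s"
    using \<open>s > 0\<close> by simp
qed

lemma M2_boundary_tendsto:
  assumes "M2_boundary e1 e2 e3 x y xi eta"
  shows M2_pairing_tendsto: "(M2_pairing x y \<longlongrightarrow> 0) (at_right 0)"
    and M2_first_integral_1_tendsto: "(M2_first_integral_1 e3 x y xi eta \<longlongrightarrow> 0) (at_right 0)"
    and M2_first_integral_2_tendsto: "(M2_first_integral_2 e2 e3 x y xi eta \<longlongrightarrow> 0) (at_right 0)"
proof -
  note B = assms[unfolded M2_boundary_def]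
  have prod: "((\<lambda>s. x j s * y k s) \<longlongrightarrow> 0) (at_right 0)"
    and sprod: "((\<lambda>s. of_real s * x j s * y k s) \<longlongrightarrow> 0) (at_right 0)"
    if "j \<le> 2" "k \<le> 2" for j k
    using B that by blast+
  have eta: "(eta j \<longlongrightarrow> 0) (at_right 0)" if "j \<le> 2" for j
    using B that by blast
  have xi: "(xi 0 \<longlongrightarrow> - e3) (at_right 0)" "(xi 1 \<longlongrightarrow> e2) (at_right 0)" "(xi 2 \<longlongrightarrow> - e1) (at_right 0)"
    using B by blast+
  show "(M2_pairing x y \<longlongrightarrow> 0) (at_right 0)"
    using tendsto_add[OF tendsto_add[OF prod[of 0 0] prod[of 1 1]] prod[of 2 2]]
    by (simp add: M2_pairing_def[abs_def])
  have "(M2_first_integral_1 e3 x y xi eta \<longlongrightarrow> e3 - 0 + 2 * 0 + - e3 - 0 + 0 * - e1) (at_right 0)"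
    unfolding M2_first_integral_1_def
    by (intro tendsto_intros sprod eta xi) auto
  then show "(M2_first_integral_1 e3 x y xi eta \<longlongrightarrow> 0) (at_right 0)"
    by simp
  have "(M2_first_integral_2 e2 e3 x y xi eta \<longlongrightarrow> e2 - 2 * e3 - 0 - 0 - 2 * - e3 - e2 + 0 * e2) (at_right 0)"
    unfolding M2_first_integral_2_def
    by (intro tendsto_intros sprod eta xi) auto
  then show "(M2_first_integral_2 e2 e3 x y xi eta \<longlongrightarrow> 0) (at_right 0)"
    by simp
qed

theorem mainTheorem7:
  fixes \<nu>0 \<nu>1 \<nu>2 :: complex
    and x y xi eta :: "nat \<Rightarrow> real \<Rightarrow> complex"
  assumes "\<nu>2 - \<nu>1 \<notin> \<int>"
    and "M2_system x y xi eta"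
    and "M2_boundary (\<nu>0 + \<nu>1 + \<nu>2) (\<nu>0 * \<nu>1 + \<nu>0 * \<nu>2 + \<nu>1 * \<nu>2) (\<nu>0 * \<nu>1 * \<nu>2)
           x y xi eta"
  shows "\<forall>s>0.
    \<nu>0 * \<nu>1 * \<nu>2 - of_real s * x 1 s * y 2 s + 2 * eta 2 s + xi 0 s - eta 1 s
      + eta 1 s * xi 2 s = 0 \<and>
    (\<nu>0 * \<nu>1 + \<nu>0 * \<nu>2 + \<nu>1 * \<nu>2) - 2 * (\<nu>0 * \<nu>1 * \<nu>2) - of_real s * x 0 s * y 1 s
      - eta 2 s - 2 * xi 0 s - xi 1 s + eta 0 s * xi 1 s = 0"
proof -
  note sys = assms(2) and bnd = assms(3)
  have pairing: "M2_pairing x y s = 0" if "s > 0" for s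
    using eq_limit_at_right_if_vector_derivative_zero[OF
        M2_pairing_has_vector_derivative_zero[OF sys] M2_pairing_tendsto[OF bnd] that] .
  have "M2_first_integral_1 (\<nu>0 * \<nu>1 * \<nu>2) x y xi eta s = 0"
    and "M2_first_integral_2 (\<nu>0 * \<nu>1 + \<nu>0 * \<nu>2 + \<nu>1 * \<nu>2) (\<nu>0 * \<nu>1 * \<nu>2) x y xi eta s = 0"
    if "s > 0" for s
    using M2_first_integral_1_has_vector_derivative[OF sys] M2_first_integral_1_tendsto[OF bnd]
      M2_first_integral_2_has_vector_derivative[OF sys] M2_first_integral_2_tendsto[OF bnd]
    by (auto simp: pairing that intro: eq_limit_at_right_if_vector_derivative_zero)
  then show ?thesis
    unfolding M2_first_integral_1_def M2_first_integral_2_def by blast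
qed

end
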